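(* Let $G$ be a directed graph with distinct vertices $s,t$. An augmented $s$-$t$ path graph of $G$ has the same set of minimum $s$-$t$ cuts as $G$.
   Context: An $s$-$t$ cut of a directed graph is a set of edges whose removal leaves no directed $s$-$t$ path; a minimum $s$-$t$ cut is one of minimum cardinality $\lambda(G)$. An augmented $s$-$t$ path graph of $G$ is constructed as follows: take a collection $\mathcal P$ of $\lambda(G)$ pairwise edge-disjoint directed $s$-$t$ paths of $G$ and let $H$ be the graph formed by the union of these paths (its vertex set $V(H)$ is covered by $\mathcal P$, and its edges are the path edges); then add to $H$ a (non-path) edge $(u,v)$ for any two vertices $u,v\in V(H)$ such that $v$ is reachable from $u$ in $G$ by a directed path all of whose internal vertices lie in $V(G)\setminus V(H)$ (in particular, whenever $(u,v)$ is an edge of $G$). *)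

theory Defs
  imports "Graph_Theory.Graph_Theory"
begin

text \<open>Directed (multi)graphs are pre_digraph records: arcs are abstract, so parallel
arcs are allowed.  Paths are the library's arc paths (apath: no repeated vertex).\<close>

definition del_arcs :: "('a,'b) pre_digraph \<Rightarrow> 'b set \<Rightarrow> ('a,'b) pre_digraph" where
  "del_arcs G C = G\<lparr>arcs := arcs G - C\<rparr>"

definition st_cut :: "('a,'b) pre_digraph \<Rightarrow> 'a \<Rightarrow> 'a \<Rightarrow> 'b set \<Rightarrow> bool" where
  "st_cut G s t C \<longleftrightarrow> C \<subseteq> arcs G \<and> \<not> (\<exists>p. pre_digraph.apath (del_arcs G C) s p t)"

definition min_st_cut :: "('a,'b) pre_digraph \<Rightarrow> 'a \<Rightarrow> 'a \<Rightarrow> 'b set \<Rightarrow> bool" where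
  "min_st_cut G s t C \<longleftrightarrow> st_cut G s t C \<and> finite C \<and>
     (\<forall>C'. st_cut G s t C' \<and> finite C' \<longrightarrow> card C \<le> card C')"

definition st_lambda :: "('a,'b) pre_digraph \<Rightarrow> 'a \<Rightarrow> 'a \<Rightarrow> nat" where
  "st_lambda G s t = Min {card C | C. st_cut G s t C \<and> finite C}"

definition path_verts :: "('a,'b) pre_digraph \<Rightarrow> 'a \<Rightarrow> 'b list set \<Rightarrow> 'a set" where
  "path_verts G s P = (\<Union>p\<in>P. set (pre_digraph.awalk_verts G s p))"

definition path_arcs :: "'b list set \<Rightarrow> 'b set" where
  "path_arcs P = (\<Union>p\<in>P. set p)"

text \<open>The non-path edges: pairs (u,v) of vertices of H such that v is reachable from u
in G by a directed path all of whose internal vertices lie outside V(H) and which does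
not use path arcs (so a path arc is not duplicated; any other arc of G between vertices
of H, including parallel copies of path arcs, does give a non-path edge).\<close>
definition nonpath_edges :: "('a,'b) pre_digraph \<Rightarrow> 'a \<Rightarrow> 'b list set \<Rightarrow> ('a \<times> 'a) set" where
  "nonpath_edges G s P = {(u,v). u \<in> path_verts G s P \<and> v \<in> path_verts G s P \<and>
     (\<exists>q. pre_digraph.apath G u q v \<and> q \<noteq> [] \<and> set q \<inter> path_arcs P = {} \<and>
          set (butlast (tl (pre_digraph.awalk_verts G u q))) \<inter> path_verts G s P = {})}"

definition aug_path_graph :: "('a,'b) pre_digraph \<Rightarrow> 'a \<Rightarrow> 'b list set \<Rightarrow> ('a, 'b + ('a \<times> 'a)) pre_digraph" where
  "aug_path_graph G s P = \<lparr> verts = path_verts G s P,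
     arcs = Inl ` path_arcs P \<union> Inr ` nonpath_edges G s P,
     tail = case_sum (tail G) fst,
     head = case_sum (head G) snd \<rparr>"

definition edge_disjoint_st_paths :: "('a,'b) pre_digraph \<Rightarrow> 'a \<Rightarrow> 'a \<Rightarrow> 'b list set \<Rightarrow> bool" where
  "edge_disjoint_st_paths G s t P \<longleftrightarrow> finite P \<and> card P = st_lambda G s t \<and>
     (\<forall>p\<in>P. pre_digraph.apath G s p t) \<and>
     (\<forall>p\<in>P. \<forall>q\<in>P. p \<noteq> q \<longrightarrow> set p \<inter> set q = {})"

end

theory Submission
  imports Defs "HOL-Library.Disjoint_Sets"
begin

(* Let k = |P| = lambda(G).  Every s-t cut of G, and every s-t cut of the augmented graph A,
   meets each of the k arc-disjoint paths of P (they are paths of A too), so it has at least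
   k arcs, and a cut with exactly k arcs consists of path arcs only.  For a set C of path arcs,
   C is an s-t cut of G iff it is one of A: an s-t walk of A avoiding C expands to one of G by
   replacing every non-path edge with the G-path it comes from, which uses no path arc;
   conversely an s-t path of G avoiding C, cut at its visits to V(H), becomes a sequence of
   path arcs and non-path edges.  So the cuts of size k, which are the minimum cuts of both
   graphs, correspond via Inl. *)

lemma del_arcs_simps [simp]:
  "verts (del_arcs G C) = verts G" "arcs (del_arcs G C) = arcs G - C"
  "tail (del_arcs G C) = tail G" "head (del_arcs G C) = head G"
  by (simp_all add: del_arcs_def)

lemma cas_del_arcs [simp]: "pre_digraph.cas (del_arcs G C) = pre_digraph.cas G"
proof (intro ext)
  show "pre_digraph.cas (del_arcs G C) u p v = pre_digraph.cas G u p v" for u p v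
    by (induction p arbitrary: u) (simp_all add: pre_digraph.cas.simps)
qed

lemma awalk_verts_del_arcs [simp]:
  "pre_digraph.awalk_verts (del_arcs G C) = pre_digraph.awalk_verts G"
proof (intro ext)
  show "pre_digraph.awalk_verts (del_arcs G C) u p = pre_digraph.awalk_verts G u p" for u p
    by (induction p arbitrary: u) (simp_all add: pre_digraph.awalk_verts.simps)
qed

lemma awalk_del_arcs_iff:
  "pre_digraph.awalk (del_arcs G C) u p v \<longleftrightarrow> pre_digraph.awalk G u p v \<and> set p \<inter> C = {}"
  by (auto simp: pre_digraph.awalk_def)

lemma apath_del_arcs_iff:
  "pre_digraph.apath (del_arcs G C) u p v \<longleftrightarrow> pre_digraph.apath G u p v \<and> set p \<inter> C = {}"
  by (auto simp: pre_digraph.apath_def awalk_del_arcs_iff)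

lemma wf_digraph_del_arcs: "wf_digraph G \<Longrightarrow> wf_digraph (del_arcs G C)"
  by (simp add: wf_digraph_def)

lemma st_cut_iff_apath:
  "st_cut G s t C \<longleftrightarrow> C \<subseteq> arcs G \<and> (\<forall>p. pre_digraph.apath G s p t \<longrightarrow> set p \<inter> C \<noteq> {})"
  by (auto simp: st_cut_def apath_del_arcs_iff)

lemma (in wf_digraph) st_cut_iff_awalk:
  "st_cut G s t C \<longleftrightarrow> C \<subseteq> arcs G \<and> (\<forall>p. awalk s p t \<longrightarrow> set p \<inter> C \<noteq> {})"
proof -
  interpret del: wf_digraph "del_arcs G C" by (rule wf_digraph_del_arcs) unfold_locales
  have "(\<exists>p. del.apath s p t) \<longleftrightarrow> (\<exists>p. del.awalk s p t)"
    by (meson del.apath_awalk_to_apath del.awalkI_apath)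
  then show ?thesis by (auto simp: st_cut_def awalk_del_arcs_iff)
qed

lemma st_cut_arcs:
  assumes "s \<noteq> t" shows "st_cut G s t (arcs G)"
proof -
  have "set p \<inter> arcs G \<noteq> {}" if "pre_digraph.apath G s p t" for p
  proof
    assume "set p \<inter> arcs G = {}"
    moreover have "set p \<subseteq> arcs G"
      using that by (simp add: pre_digraph.apath_def pre_digraph.awalk_def)
    ultimately have "p = []"
      by (simp add: Int_absorb2)
    then show False
      using that assms by (simp add: pre_digraph.apath_def pre_digraph.awalk_def pre_digraph.cas.simps)
  qed
  then show ?thesis
    by (simp add: st_cut_iff_apath)
qed

lemma (in fin_digraph) finite_st_cut: "st_cut G s t C \<Longrightarrow> finite C"
  unfolding st_cut_def using finite_arcs by (blast dest: finite_subset)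

lemma (in fin_digraph) finite_st_cut_sizes: "finite {card C | C. st_cut G s t C \<and> finite C}"
proof (rule finite_subset)
  show "{card C | C. st_cut G s t C \<and> finite C} \<subseteq> card ` Pow (arcs G)"
    unfolding st_cut_def by auto
qed simp

lemma (in fin_digraph) st_lambda_attained:
  assumes "s \<noteq> t" shows "\<exists>C. st_cut G s t C \<and> card C = st_lambda G s t"
proof -
  have "{card C | C. st_cut G s t C \<and> finite C} \<noteq> {}"
    using st_cut_arcs[OF assms] finite_arcs by blast
  with finite_st_cut_sizes have "st_lambda G s t \<in> {card C | C. st_cut G s t C \<and> finite C}"
    unfolding st_lambda_def by (rule Min_in)
  then show ?thesis
    by auto
qed

lemma min_st_cut_iff_card_eq:
  assumes lower: "\<And>C. st_cut G s t C \<Longrightarrow> finite C \<Longrightarrow> k \<le> card C"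
    and attained: "st_cut G s t C\<^sub>0" "finite C\<^sub>0" "card C\<^sub>0 = k"
  shows "min_st_cut G s t C \<longleftrightarrow> st_cut G s t C \<and> finite C \<and> card C = k"
  unfolding min_st_cut_def using lower attained by (metis le_antisym)

lemma card_le_card_of_hitting_set:
  assumes "finite P" "finite C" "disjoint_family_on S P" "\<And>p. p \<in> P \<Longrightarrow> S p \<inter> C \<noteq> {}"
  shows "card P \<le> card C" and "card C \<le> card P \<Longrightarrow> C \<subseteq> \<Union>(S ` P)"
proof -
  let ?U = "\<Union>p\<in>P. S p \<inter> C"
  have "card P = (\<Sum>p\<in>P. 1)"
    by simp
  also have "\<dots> \<le> (\<Sum>p\<in>P. card (S p \<inter> C))"
    using assms(2,4) by (intro sum_mono) (simp add: Suc_leI card_gt_0_iff)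
  also have "\<dots> = card ?U"
    using assms(1-3) by (intro card_UN_disjoint'[symmetric]) (auto simp: disjoint_family_on_def)
  finally have P_le_U: "card P \<le> card ?U" .
  have U_le_C: "card ?U \<le> card C"
    using assms(2) by (intro card_mono) auto
  with P_le_U show "card P \<le> card C"
    by simp
  assume "card C \<le> card P"
  then have "?U = C"
    using P_le_U U_le_C assms(2) by (intro card_subset_eq) auto
  then show "C \<subseteq> \<Union>(S ` P)"
    by blast
qed

lemma (in pre_digraph) awlast_in_tl_awalk_verts:
  "p \<noteq> [] \<Longrightarrow> awlast u p \<in> set (tl (awalk_verts u p))"
  by (cases p) (auto simp: awalk_verts_conv)

lemma (in wf_digraph) awalk_verts_snoc:
  assumes "awalk u (p @ [e]) v"
  shows "awalk_verts u (p @ [e]) = awalk_verts u p @ [head G e]"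
  using awalk_verts_append[OF assms] by simp

locale st_path_packing = fin_digraph G for G :: "('a, 'b) pre_digraph" +
  fixes s t :: 'a and P :: "'b list set"
  assumes s_ne_t: "s \<noteq> t" and packing: "edge_disjoint_st_paths G s t P"
begin

abbreviation aug :: "('a, 'b + 'a \<times> 'a) pre_digraph" where
  "aug \<equiv> aug_path_graph G s P"

abbreviation VH :: "'a set" where
  "VH \<equiv> path_verts G s P"

abbreviation PA :: "'b set" where
  "PA \<equiv> path_arcs P"

lemma finite_P: "finite P"
  and card_P: "card P = st_lambda G s t"
  and apath_P: "p \<in> P \<Longrightarrow> apath s p t"
  and disjoint_P: "disjoint_family_on set P"
  using packing by (auto simp: edge_disjoint_st_paths_def disjoint_family_on_def)

lemma aug_simps [simp]:
  "verts aug = VH" "arcs aug = Inl ` PA \<union> Inr ` nonpath_edges G s P"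
  "tail aug = case_sum (tail G) fst" "head aug = case_sum (head G) snd"
  by (simp_all add: aug_path_graph_def)

lemma path_arcs_subset_arcs: "PA \<subseteq> arcs G"
  using apath_P by (auto simp: path_arcs_def apath_def awalk_def)

lemma path_verts_subset_verts: "VH \<subseteq> verts G"
proof
  fix v assume "v \<in> VH"
  then obtain p where p: "p \<in> P" "v \<in> set (awalk_verts s p)"
    by (auto simp: path_verts_def)
  have "awalk s p t"
    using apath_P[OF p(1)] by (simp add: apath_def)
  then obtain "set (awalk_verts s p) \<subseteq> verts G"
    by (rule awalkE)
  with p(2) show "v \<in> verts G"
    by blast
qed

lemma path_arc_ends_in_path_verts:
  assumes "e \<in> PA" shows "tail G e \<in> VH" "head G e \<in> VH"
proof -
  obtain p where p: "p \<in> P" "e \<in> set p"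
    using assms by (auto simp: path_arcs_def)
  then have "awalk s p t"
    using apath_P by (simp add: apath_def)
  then have "tail G e \<in> set (awalk_verts s p)" "head G e \<in> set (awalk_verts s p)"
    using p(2) by (auto simp: set_awalk_verts)
  with p(1) show "tail G e \<in> VH" "head G e \<in> VH"
    unfolding path_verts_def by blast+
qed

lemma s_t_in_path_verts:
  assumes "P \<noteq> {}" shows "s \<in> VH" "t \<in> VH"
proof -
  obtain p where p: "p \<in> P"
    using assms by blast
  then have "awalk s p t"
    using apath_P by (simp add: apath_def)
  then have "s \<in> set (awalk_verts s p)" "t \<in> set (awalk_verts s p)"
    using hd_in_awalk_verts(1) last_in_set[OF awalk_verts_non_Nil] by auto
  with p show "s \<in> VH" "t \<in> VH"
    unfolding path_verts_def by blast+
qed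

lemma nonpath_edges_subset: "nonpath_edges G s P \<subseteq> VH \<times> VH"
  unfolding nonpath_edges_def by auto

lemma wf_digraph_aug: "wf_digraph aug"
proof
  fix a assume "a \<in> arcs aug"
  then show "tail aug a \<in> verts aug" "head aug a \<in> verts aug"
    using path_arc_ends_in_path_verts nonpath_edges_subset by auto
qed

interpretation aug: wf_digraph aug
  by (rule wf_digraph_aug)

lemma awalk_aug_map_Inl:
  assumes "awalk u p v" "set p \<subseteq> PA" "u \<in> VH"
  shows "aug.awalk u (map Inl p) v"
  using assms
proof (induction p arbitrary: u)
  case Nil
  then show ?case
    by (simp add: awalk_Nil_iff aug.awalk_Nil_iff)
next
  case (Cons e p)
  then have "head G e \<in> VH"
    using path_arc_ends_in_path_verts by simp
  with Cons show ?case
    by (auto simp: awalk_Cons_iff aug.awalk_Cons_iff)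
qed

lemma card_P_le_st_cut_G:
  assumes "st_cut G s t C"
  shows "card P \<le> card C" and "card C \<le> card P \<Longrightarrow> C \<subseteq> PA"
proof -
  have "set p \<inter> C \<noteq> {}" if "p \<in> P" for p
    using assms apath_P[OF that] by (simp add: st_cut_iff_apath)
  note hitting = card_le_card_of_hitting_set[OF finite_P finite_st_cut[OF assms] disjoint_P this]
  show "card P \<le> card C"
    by (rule hitting(1))
  show "card C \<le> card P \<Longrightarrow> C \<subseteq> PA"
    using hitting(2) by (simp add: path_arcs_def)
qed

lemma card_P_le_st_cut_aug:
  assumes "st_cut aug s t C" "finite C"
  shows "card P \<le> card C" and "card C \<le> card P \<Longrightarrow> C \<subseteq> Inl ` PA"
proof -
  have hits: "Inl ` set p \<inter> C \<noteq> {}" if p: "p \<in> P" for p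
  proof -
    have "awalk s p t" "set p \<subseteq> PA"
      using apath_P[OF p] p by (auto simp: apath_def path_arcs_def)
    moreover have "s \<in> VH"
      using p by (intro s_t_in_path_verts(1)) auto
    ultimately have "aug.awalk s (map Inl p) t"
      by (rule awalk_aug_map_Inl)
    with assms(1) have "set (map Inl p) \<inter> C \<noteq> {}"
      unfolding aug.st_cut_iff_awalk by blast
    then show ?thesis
      by simp
  qed
  have "disjoint_family_on (\<lambda>p. Inl ` set p) P"
    using disjoint_P by (auto simp: disjoint_family_on_def)
  note hitting = card_le_card_of_hitting_set[OF finite_P assms(2) this hits]
  show "card P \<le> card C"
    by (rule hitting(1))
  show "card C \<le> card P \<Longrightarrow> C \<subseteq> Inl ` PA"
    using hitting(2) by (simp add: path_arcs_def image_UN)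
qed

lemma awalk_G_of_awalk_aug:
  assumes "aug.awalk u ps v"
  shows "\<exists>q. awalk u q v \<and> set q \<inter> PA \<subseteq> Inl -` set ps"
  using assms
proof (induction ps arbitrary: u)
  case Nil
  then have "u = v" "u \<in> verts G"
    using path_verts_subset_verts by (auto simp: aug.awalk_Nil_iff)
  then show ?case
    by (intro exI[of _ "[]"]) (simp add: awalk_Nil_iff)
next
  case (Cons a ps)
  then have a: "a \<in> arcs aug" "tail aug a = u" and "aug.awalk (head aug a) ps v"
    by (auto simp: aug.awalk_Cons_iff)
  then obtain q where q: "awalk (head aug a) q v" "set q \<inter> PA \<subseteq> Inl -` set ps"
    using Cons.IH by blast
  show ?case
  proof (cases a)
    case (Inl e)
    with a q(1) have "awalk u (e # q) v"
      using path_arcs_subset_arcs by (auto simp: awalk_Cons_iff)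
    with q(2) Inl show ?thesis
      by (intro exI[of _ "e # q"]) auto
  next
    case (Inr uv)
    with a have "(u, head aug a) \<in> nonpath_edges G s P"
      by auto
    then obtain r where r: "apath u r (head aug a)" "set r \<inter> PA = {}"
      unfolding nonpath_edges_def by blast
    then have "awalk u (r @ q) v"
      using q(1) by (intro awalk_appendI) (simp_all add: apath_def)
    with r(2) q(2) show ?thesis
      by (intro exI[of _ "r @ q"]) auto
  qed
qed

lemma aug_arc_of_segment:
  assumes path: "apath x (r @ [e]) (head G e)" and ends: "x \<in> VH" "head G e \<in> VH"
    and r_outside: "set r \<inter> PA = {}" "set (tl (awalk_verts x r)) \<inter> VH = {}"
  obtains a where "a \<in> arcs aug" "tail aug a = x" "head aug a = head G e"
    and "a \<in> insert (Inl e) (range Inr)"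
proof (cases "e \<in> PA")
  case True
  \<comment> \<open>a path arc starts in V(H), so it can only be the first arc of the segment\<close>
  have "tail G e = awlast x r"
    using path by (simp add: apath_append_iff apath_Cons_iff)
  moreover have "tail G e \<in> VH"
    using path_arc_ends_in_path_verts(1)[OF True] .
  ultimately have "awlast x r \<notin> set (tl (awalk_verts x r))"
    using r_outside(2) by auto
  then have "r = []"
    using awlast_in_tl_awalk_verts by metis
  with \<open>tail G e = awlast x r\<close> have "tail G e = x"
    by simp
  with True show thesis
    by (intro that[of "Inl e"]) simp_all
next
  case False
  have "awalk x (r @ [e]) (head G e)"
    using path by (simp add: apath_def)
  from awalk_verts_snoc[OF this]
  have "butlast (tl (awalk_verts x (r @ [e]))) = tl (awalk_verts x r)"
    by simp
  with path ends r_outside False have "(x, head G e) \<in> nonpath_edges G s P"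
    unfolding nonpath_edges_def by (auto intro!: exI[of _ "r @ [e]"])
  then show thesis
    by (intro that[of "Inr (x, head G e)"]) simp_all
qed

(* r is the stretch of the path walked since its last visit to V(H). *)
lemma awalk_aug_of_apath_G:
  assumes "apath x (r @ p) t" "x \<in> VH" "t \<in> VH"
    and "set r \<inter> PA = {}" "set (tl (awalk_verts x r)) \<inter> VH = {}"
  shows "\<exists>ps. aug.awalk x ps t \<and> Inl -` set ps \<subseteq> set p"
  using assms
proof (induction p arbitrary: x r)
  case Nil
  show ?case
  proof (cases "r = []")
    case True
    with Nil.prems(1,3) show ?thesis
      by (intro exI[of _ "[]"]) (simp add: apath_Nil_iff aug.awalk_Nil_iff)
  next
    case False
    have "awlast x r = t"
      using Nil.prems(1) by (simp add: apath_def)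
    with awlast_in_tl_awalk_verts[OF False, of x] have "t \<in> set (tl (awalk_verts x r))"
      by simp
    with Nil.prems(3,5) show ?thesis
      by blast
  qed
next
  case (Cons e p)
  have segment: "apath x (r @ [e]) (head G e)" and rest: "apath (head G e) p t"
    using Cons.prems(1) apath_append_iff[of x "r @ [e]" p t] by (simp_all add: awalk_verts_conv)
  show ?case
  proof (cases "head G e \<in> VH")
    case True
    obtain a where a: "a \<in> arcs aug" "tail aug a = x" "head aug a = head G e"
        "a \<in> insert (Inl e) (range Inr)"
      using aug_arc_of_segment[OF segment Cons.prems(2) True Cons.prems(4,5)] .
    obtain ps where ps: "aug.awalk (head G e) ps t" "Inl -` set ps \<subseteq> set p"
      using Cons.IH[of "head G e" "[]"] rest True Cons.prems(3) by auto
    from a ps have "aug.awalk x (a # ps) t"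
      by (simp add: aug.awalk_Cons_iff)
    with a(4) ps(2) show ?thesis
      by (intro exI[of _ "a # ps"]) auto
  next
    case False
    then have "e \<notin> PA"
      using path_arc_ends_in_path_verts(2) by blast
    have "awalk x (r @ [e]) (head G e)"
      using segment by (simp add: apath_def)
    from awalk_verts_snoc[OF this]
    have "set (tl (awalk_verts x (r @ [e]))) = set (tl (awalk_verts x r)) \<union> {head G e}"
      by simp
    with Cons.prems \<open>e \<notin> PA\<close> False
    obtain ps where "aug.awalk x ps t" "Inl -` set ps \<subseteq> set p"
      using Cons.IH[of x "r @ [e]"] by auto
    then show ?thesis
      by auto
  qed
qed

lemma st_cut_aug_iff_st_cut_G:
  assumes "C \<subseteq> PA"
  shows "st_cut aug s t (Inl ` C) \<longleftrightarrow> st_cut G s t C"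
proof
  assume cut_aug: "st_cut aug s t (Inl ` C)"
  show "st_cut G s t C"
  proof (cases "P = {}")
    case True
    obtain C\<^sub>0 where C\<^sub>0: "st_cut G s t C\<^sub>0" "card C\<^sub>0 = st_lambda G s t"
      using st_lambda_attained[OF s_ne_t] by blast
    with True have "C\<^sub>0 = {}"
      using card_P finite_st_cut by simp
    moreover from True assms have "C = {}"
      by (simp add: path_arcs_def)
    ultimately show ?thesis
      using C\<^sub>0(1) by simp
  next
    case False
    have "set p \<inter> C \<noteq> {}" if p: "apath s p t" for p
    proof
      assume "set p \<inter> C = {}"
      obtain ps where "aug.awalk s ps t" "Inl -` set ps \<subseteq> set p"
        using awalk_aug_of_apath_G[of s "[]" p] p s_t_in_path_verts[OF False] by auto
      with \<open>set p \<inter> C = {}\<close> have "aug.awalk s ps t" "set ps \<inter> Inl ` C = {}"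
        by auto
      with cut_aug show False
        unfolding aug.st_cut_iff_awalk by blast
    qed
    with assms path_arcs_subset_arcs show ?thesis
      unfolding st_cut_iff_apath by blast
  qed
next
  assume cut_G: "st_cut G s t C"
  have "set ps \<inter> Inl ` C \<noteq> {}" if ps: "aug.awalk s ps t" for ps
  proof
    assume "set ps \<inter> Inl ` C = {}"
    obtain q where "awalk s q t" "set q \<inter> PA \<subseteq> Inl -` set ps"
      using awalk_G_of_awalk_aug[OF ps] by blast
    with \<open>set ps \<inter> Inl ` C = {}\<close> assms have "awalk s q t" "set q \<inter> C = {}"
      by auto
    with cut_G show False
      unfolding st_cut_iff_awalk by blast
  qed
  with assms show "st_cut aug s t (Inl ` C)"
    unfolding aug.st_cut_iff_awalk by auto
qed

lemma min_st_cut_G_iff: "min_st_cut G s t C \<longleftrightarrow> st_cut G s t C \<and> card C = card P"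
proof -
  obtain C\<^sub>0 where "st_cut G s t C\<^sub>0" "card C\<^sub>0 = card P"
    using st_lambda_attained[OF s_ne_t] card_P by auto
  then have "min_st_cut G s t C \<longleftrightarrow> st_cut G s t C \<and> finite C \<and> card C = card P"
    using card_P_le_st_cut_G(1) finite_st_cut by (intro min_st_cut_iff_card_eq) auto
  then show ?thesis
    using finite_st_cut by blast
qed

lemma min_st_cut_aug_iff: "min_st_cut aug s t C \<longleftrightarrow> st_cut aug s t C \<and> finite C \<and> card C = card P"
proof -
  obtain C\<^sub>0 where C\<^sub>0: "st_cut G s t C\<^sub>0" "card C\<^sub>0 = card P"
    using st_lambda_attained[OF s_ne_t] card_P by auto
  then have "C\<^sub>0 \<subseteq> PA"
    by (intro card_P_le_st_cut_G(2)) simp_all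
  with C\<^sub>0 have "st_cut aug s t (Inl ` C\<^sub>0)" "finite (Inl ` C\<^sub>0)" "card (Inl ` C\<^sub>0) = card P"
    using finite_st_cut by (simp_all add: st_cut_aug_iff_st_cut_G card_image)
  then show ?thesis
    using card_P_le_st_cut_aug(1) by (intro min_st_cut_iff_card_eq)
qed

end

theorem claim6:
  fixes G :: "('a,'b) pre_digraph" and s t :: 'a and P :: "'b list set"
  assumes "fin_digraph G"
    and "s \<in> verts G" and "t \<in> verts G" and "s \<noteq> t"
    and "edge_disjoint_st_paths G s t P"
  shows "{C. min_st_cut (aug_path_graph G s P) s t C} = (\<lambda>C. Inl ` C) ` {C. min_st_cut G s t C}"
proof -
  interpret st_path_packing G s t P
    using assms by (simp add: st_path_packing_def st_path_packing_axioms_def)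
  have "C' \<in> (\<lambda>C. Inl ` C) ` {C. min_st_cut G s t C}" if "min_st_cut aug s t C'" for C'
  proof -
    from that have cut: "st_cut aug s t C'" "finite C'" "card C' = card P"
      by (simp_all add: min_st_cut_aug_iff)
    then have "C' \<subseteq> Inl ` PA"
      by (intro card_P_le_st_cut_aug(2)) simp_all
    then obtain C where C: "C \<subseteq> PA" "C' = Inl ` C"
      by (auto simp: subset_image_iff)
    with cut have "min_st_cut G s t C"
      by (simp add: min_st_cut_G_iff st_cut_aug_iff_st_cut_G card_image)
    with C(2) show ?thesis
      by blast
  qed
  moreover have "min_st_cut aug s t (Inl ` C)" if "min_st_cut G s t C" for C
  proof -
    from that have cut: "st_cut G s t C" "card C = card P"
      by (simp_all add: min_st_cut_G_iff)
    then have "C \<subseteq> PA"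
      by (intro card_P_le_st_cut_G(2)) simp_all
    with cut show ?thesis
      by (simp add: min_st_cut_aug_iff st_cut_aug_iff_st_cut_G card_image finite_st_cut)
  qed
  ultimately show ?thesis
    by blast
qed

end
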